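(* Let $G$ be a nontrivial finite abelian group and $\mathcal P_\bullet$ a $3^G$ subfactor planar algebra in which $\rho\otimes g\cong g^{-1}\rho$ for all $g\in G$. Then every bimodule (vertex) at depth $4$ of the principal graph $\Gamma_+$ is self-dual, i.e. $\overline{g\rho}\cong g\rho$ for all $g\in G$.
   Context: A $3^G$ subfactor planar algebra is a subfactor planar algebra whose principal graph $\Gamma_+$ consists of a path $1-X-\rho-Z$ (depths $0$–$3$) and, for each $g\in G\setminus\{1\}$, a path $Z-g\rho-gX-g$ (depths $3$–$6$), and whose even bimodules form a fusion category with simple objects $G\cup\{g\rho\}$ and fusion rules $g\otimes h=gh$, $g\otimes\rho=g\rho$, $\rho\otimes g=\theta(g)\rho$ for an automorphism $\theta$ of $G$, and $\rho\otimes\rho\cong1\oplus\bigoplus_{g\in G}g\rho$. Here $\theta(g)=g^{-1}$. *)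

theory Defs
  imports "HOL-Algebra.Group"
begin

text \<open>Simple objects of the even part of a 3^G subfactor planar algebra:
  the group elements g (Grp g) and the objects g rho (Rho g); rho itself is Rho 1.\<close>
datatype 'g obj3 = Grp 'g | Rho 'g

definition simples3 :: "('g, 'b) monoid_scheme \<Rightarrow> 'g obj3 set" where
  "simples3 G = Grp ` carrier G \<union> Rho ` carrier G"

text \<open>Fusion-rule data of a (rigid, semisimple) fusion category on the set S of
  simple objects: N a b c = dim Hom(c, a \<otimes> b), unit object u, duality dual.\<close>
definition fusion_rules_with_duality ::
  "'o set \<Rightarrow> 'o \<Rightarrow> ('o \<Rightarrow> 'o \<Rightarrow> 'o \<Rightarrow> nat) \<Rightarrow> ('o \<Rightarrow> 'o) \<Rightarrow> bool" where
  "fusion_rules_with_duality S u N dual \<longleftrightarrow>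
     finite S \<and> u \<in> S \<and>
     (\<forall>a\<in>S. dual a \<in> S \<and> dual (dual a) = a) \<and>
     (\<forall>a\<in>S. \<forall>b\<in>S. N u a b = of_bool (a = b) \<and> N a u b = of_bool (a = b)) \<and>
     (\<forall>a\<in>S. \<forall>b\<in>S. \<forall>c\<in>S. \<forall>d\<in>S.
        (\<Sum>e\<in>S. N a b e * N e c d) = (\<Sum>e\<in>S. N b c e * N a e d)) \<and>
     (\<forall>a\<in>S. \<forall>b\<in>S. N a b u = of_bool (b = dual a)) \<and>
     (\<forall>a\<in>S. \<forall>b\<in>S. \<forall>c\<in>S.
        N a b c = N (dual b) (dual a) (dual c) \<and>
        N a b c = N (dual a) c b \<and>
        N a b c = N c (dual b) a)"

definition three_G_fusion_rules_inv ::
  "('g, 'b) monoid_scheme \<Rightarrow> ('g obj3 \<Rightarrow> 'g obj3 \<Rightarrow> 'g obj3 \<Rightarrow> nat) \<Rightarrow> bool" where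
  "three_G_fusion_rules_inv G N \<longleftrightarrow>
     (\<forall>g\<in>carrier G. \<forall>h\<in>carrier G. \<forall>c\<in>simples3 G.
        N (Grp g) (Grp h) c = of_bool (c = Grp (g \<otimes>\<^bsub>G\<^esub> h))) \<and>
     (\<forall>g\<in>carrier G. \<forall>c\<in>simples3 G.
        N (Grp g) (Rho \<one>\<^bsub>G\<^esub>) c = of_bool (c = Rho g)) \<and>
     (\<forall>g\<in>carrier G. \<forall>c\<in>simples3 G.
        N (Rho \<one>\<^bsub>G\<^esub>) (Grp g) c = of_bool (c = Rho (inv\<^bsub>G\<^esub> g))) \<and>
     (\<forall>c\<in>simples3 G.
        N (Rho \<one>\<^bsub>G\<^esub>) (Rho \<one>\<^bsub>G\<^esub>) c =
          of_bool (c = Grp \<one>\<^bsub>G\<^esub> \<or> (\<exists>g\<in>carrier G. c = Rho g)))"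

end

theory Submission
  imports Defs
begin

text \<open>Duals are read off from the unit: since N a b 1 = [b = a*], the relations
  rho \<otimes> rho \<ni> 1 and g \<otimes> g\<inverse> = 1 give rho* = rho and g* = g\<inverse>.
  Dualising g \<otimes> rho = g rho reverses the order of the factors, so
  (g rho)* = rho* \<otimes> g* = rho \<otimes> g\<inverse> = \<theta>(g\<inverse>) rho = g rho.\<close>

lemma fusion_dual_eqI:
  assumes "fusion_rules_with_duality S u N dual"
    and "a \<in> S" "b \<in> S" "N a b u \<noteq> 0"
  shows "dual a = b"
proof -
  have "\<forall>a\<in>S. \<forall>b\<in>S. N a b u = of_bool (b = dual a)"
    using assms(1) unfolding fusion_rules_with_duality_def by (elim conjE) assumption
  then have "N a b u = of_bool (b = dual a)"
    using assms(2,3) by blast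
  with assms(4) show ?thesis
    by auto
qed

lemma fusion_mult_dual:
  assumes "fusion_rules_with_duality S u N dual"
    and "a \<in> S" "b \<in> S" "c \<in> S"
  shows "N (dual b) (dual a) (dual c) = N a b c"
proof -
  have "\<forall>a\<in>S. \<forall>b\<in>S. \<forall>c\<in>S.
      N a b c = N (dual b) (dual a) (dual c) \<and> N a b c = N (dual a) c b \<and> N a b c = N c (dual b) a"
    using assms(1) unfolding fusion_rules_with_duality_def by (elim conjE) assumption
  then have "N a b c = N (dual b) (dual a) (dual c)"
    using assms(2-4) by blast
  then show ?thesis
    by (rule sym)
qed

lemma fusion_dual_mem:
  assumes "fusion_rules_with_duality S u N dual" and "a \<in> S"
  shows "dual a \<in> S"
proof -
  have "\<forall>a\<in>S. dual a \<in> S \<and> dual (dual a) = a"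
    using assms(1) unfolding fusion_rules_with_duality_def by (elim conjE) assumption
  with assms(2) show ?thesis
    by blast
qed

lemma simples3_Grp [simp]: "Grp g \<in> simples3 G \<longleftrightarrow> g \<in> carrier G"
  and simples3_Rho [simp]: "Rho g \<in> simples3 G \<longleftrightarrow> g \<in> carrier G"
  by (auto simp: simples3_def)

locale three_G_inv = group +
  fixes N :: "'a obj3 \<Rightarrow> 'a obj3 \<Rightarrow> 'a obj3 \<Rightarrow> nat"
    and dual :: "'a obj3 \<Rightarrow> 'a obj3"
  assumes fusion: "fusion_rules_with_duality (simples3 G) (Grp \<one>\<^bsub>G\<^esub>) N dual"
    and rules: "three_G_fusion_rules_inv G N"
begin

lemma dual_Rho_one: "dual (Rho \<one>) = Rho \<one>"
proof (rule fusion_dual_eqI[OF fusion])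
  show "N (Rho \<one>) (Rho \<one>) (Grp \<one>) \<noteq> 0"
    using rules unfolding three_G_fusion_rules_inv_def by simp
qed simp_all

lemma dual_Grp:
  assumes "g \<in> carrier G"
  shows "dual (Grp g) = Grp (inv g)"
proof (rule fusion_dual_eqI[OF fusion])
  show "N (Grp g) (Grp (inv g)) (Grp \<one>) \<noteq> 0"
    using rules assms unfolding three_G_fusion_rules_inv_def by simp
qed (simp_all add: assms)

lemma dual_Rho:
  assumes g: "g \<in> carrier G"
  shows "dual (Rho g) = Rho g"
proof -
  have mem: "dual (Rho g) \<in> simples3 G"
    using fusion_dual_mem[OF fusion] g by simp
  have "N (Rho \<one>) (Grp (inv g)) (dual (Rho g)) = N (Grp g) (Rho \<one>) (Rho g)"
    using fusion_mult_dual[OF fusion, of "Grp g" "Rho \<one>" "Rho g"] g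
    by (simp add: dual_Rho_one dual_Grp)
  also have "\<dots> = 1"
    using rules g unfolding three_G_fusion_rules_inv_def by simp
  finally have "N (Rho \<one>) (Grp (inv g)) (dual (Rho g)) = 1" .
  moreover have "N (Rho \<one>) (Grp (inv g)) (dual (Rho g)) = of_bool (dual (Rho g) = Rho g)"
    using rules g mem unfolding three_G_fusion_rules_inv_def by simp
  ultimately show ?thesis
    by (metis of_bool_eq_1_iff)
qed

end

theorem corollary2p5:
  fixes G :: "('g, 'b) monoid_scheme"
    and N :: "'g obj3 \<Rightarrow> 'g obj3 \<Rightarrow> 'g obj3 \<Rightarrow> nat"
    and dual :: "'g obj3 \<Rightarrow> 'g obj3"
  assumes "comm_group G"
    and "finite (carrier G)"
    and "carrier G \<noteq> {\<one>\<^bsub>G\<^esub>}"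
    and "fusion_rules_with_duality (simples3 G) (Grp \<one>\<^bsub>G\<^esub>) N dual"
    and "three_G_fusion_rules_inv G N"
  shows "\<forall>g\<in>carrier G. dual (Rho g) = Rho g"
proof -
  interpret three_G_inv G N dual
    using assms(1,4,5) by (simp add: three_G_inv_def three_G_inv_axioms_def comm_group.axioms(2))
  show ?thesis using dual_Rho by blast
qed

end
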